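(* Let $\Gamma$ be a Deza graph with parameters $(n,k,k-1,a)$, $k>1$, $\beta=1$. Let $x$ be an $NA$-vertex and $y$ an $A$-vertex. Then (1) if $x$ and $y$ are adjacent, then $y$ and $y_b$ both lie in $N(x,x')$; (2) either all possible edges between $\{x,x',x_b,x_b'\}$ and $\{y,y_b\}$ are present, or there are no such edges.
   Context: A Deza graph with parameters $(n,k,b,a)$, $a\le b$, is a $k$-regular graph on $n$ vertices in which any two distinct vertices have $a$ or $b$ common neighbours; $\beta$ is the number of vertices $u\ne v$ with exactly $b$ common neighbours with a given vertex $v$. Since $\beta=1$, for each vertex $x$ let $x_b$ denote the unique vertex having $b=k-1$ common neighbours with $x$. A vertex $x$ is an $A$-vertex if $x$ is adjacent to $x_b$, and an $NA$-vertex otherwise. $N(x,y)$ is the set of common neighbours of $x$ and $y$. For an $NA$-vertex $x$, $x'$ denotes the unique neighbour of $x$ not adjacent to $x_b$, and $x_b'=(x')_b=(x_b)'$. *)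

theory Defs
  imports Main
begin

definition common_nbrs :: "'v set \<Rightarrow> ('v \<Rightarrow> 'v \<Rightarrow> bool) \<Rightarrow> 'v \<Rightarrow> 'v \<Rightarrow> 'v set" where
  "common_nbrs V E x y = {z \<in> V. E x z \<and> E y z}"

definition deza_graph :: "'v set \<Rightarrow> ('v \<Rightarrow> 'v \<Rightarrow> bool) \<Rightarrow> nat \<Rightarrow> nat \<Rightarrow> nat \<Rightarrow> nat \<Rightarrow> bool" where
  "deza_graph V E n k b a \<longleftrightarrow>
     finite V \<and> card V = n \<and>
     (\<forall>x y. E x y \<longrightarrow> x \<in> V \<and> y \<in> V) \<and>
     (\<forall>x y. E x y \<longrightarrow> E y x) \<and>
     (\<forall>x. \<not> E x x) \<and>
     (\<forall>x \<in> V. card {y \<in> V. E x y} = k) \<and>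
     a \<le> b \<and>
     (\<forall>x \<in> V. \<forall>y \<in> V. x \<noteq> y \<longrightarrow>
        card (common_nbrs V E x y) = a \<or> card (common_nbrs V E x y) = b)"

definition beta_at :: "'v set \<Rightarrow> ('v \<Rightarrow> 'v \<Rightarrow> bool) \<Rightarrow> nat \<Rightarrow> 'v \<Rightarrow> nat" where
  "beta_at V E b v = card {u \<in> V. u \<noteq> v \<and> card (common_nbrs V E v u) = b}"

text \<open>x_b: the unique vertex having b common neighbours with x (meaningful when beta = 1).\<close>
definition bvert :: "'v set \<Rightarrow> ('v \<Rightarrow> 'v \<Rightarrow> bool) \<Rightarrow> nat \<Rightarrow> 'v \<Rightarrow> 'v" where
  "bvert V E b x = (THE u. u \<in> V \<and> u \<noteq> x \<and> card (common_nbrs V E x u) = b)"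

definition A_vertex :: "'v set \<Rightarrow> ('v \<Rightarrow> 'v \<Rightarrow> bool) \<Rightarrow> nat \<Rightarrow> 'v \<Rightarrow> bool" where
  "A_vertex V E b x \<longleftrightarrow> x \<in> V \<and> E x (bvert V E b x)"

definition NA_vertex :: "'v set \<Rightarrow> ('v \<Rightarrow> 'v \<Rightarrow> bool) \<Rightarrow> nat \<Rightarrow> 'v \<Rightarrow> bool" where
  "NA_vertex V E b x \<longleftrightarrow> x \<in> V \<and> \<not> E x (bvert V E b x)"

text \<open>x': the unique neighbour of x not adjacent to x_b (meaningful for NA-vertices).\<close>
definition pvert :: "'v set \<Rightarrow> ('v \<Rightarrow> 'v \<Rightarrow> bool) \<Rightarrow> nat \<Rightarrow> 'v \<Rightarrow> 'v" where
  "pvert V E b x = (THE u. u \<in> V \<and> E x u \<and> \<not> E u (bvert V E b x))"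

end

theory Submission
  imports Defs "HOL-Library.Disjoint_Sets" "HOL-Library.Z2"
begin

(*
  Every vertex v has the same neighbours as v_b except for one vertex v' (for an A-vertex
  v' = v_b), and every third vertex z has exactly a common neighbours with v and with v_b;
  hence z ~ v' iff z ~ v_b'.  The map w |-> w_b is a fixed-point-free involution, so in any
  N(u, v) the vertices w with w_b in N(u, v) come in pairs, and the others lie in
  {u_b, u', v_b, v'}.  For an NA-vertex x this makes N(x, x') closed under w |-> w_b, so a is
  even; counting N(x, y) modulo 2 then gives x ~ y_b iff y ~ x', and the rule
  z ~ v' iff z ~ v_b' propagates this to all eight pairs between {x, x', x_b, x_b'} and {y, y_b}.
*)

lemma even_card_involution:
  assumes "\<And>x. x \<in> X \<Longrightarrow> h x \<in> X" and "\<And>x. x \<in> X \<Longrightarrow> h (h x) = x"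
    and "\<And>x. x \<in> X \<Longrightarrow> h x \<noteq> x"
  shows "even (card X)"
proof -
  have "(\<Sum>x\<in>X. 1 :: bit) = 0"
    by (rule sum_involution_eq_0[where h = h]) (use assms in simp_all)
  then have "even (of_nat (card X) :: bit)"
    by simp
  then show ?thesis
    by (simp only: even_of_nat_iff)
qed

lemma card_filter_insert:
  assumes "finite D" and "q \<notin> D"
  shows "card {w \<in> insert q D. P w} = card {w \<in> D. P w} + of_bool (P q)"
proof -
  have "{w \<in> insert q D. P w} = (if P q then insert q {w \<in> D. P w} else {w \<in> D. P w})"
    by auto
  then show ?thesis
    using assms by simp
qed

lemma common_nbrs_commute: "common_nbrs V E u v = common_nbrs V E v u"
  by (auto simp: common_nbrs_def)

locale deza_beta1 =
  fixes V :: "'v set" and E :: "'v \<Rightarrow> 'v \<Rightarrow> bool" and n k a :: nat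
  assumes deza: "deza_graph V E n k (k - 1) a"
    and k_gt_1: "1 < k"
    and beta_1: "\<forall>v \<in> V. beta_at V E (k - 1) v = 1"
begin

abbreviation bv :: "'v \<Rightarrow> 'v" where "bv \<equiv> bvert V E (k - 1)"
abbreviation pv :: "'v \<Rightarrow> 'v" where "pv \<equiv> pvert V E (k - 1)"
abbreviation A :: "'v \<Rightarrow> bool" where "A \<equiv> A_vertex V E (k - 1)"
abbreviation NA :: "'v \<Rightarrow> bool" where "NA \<equiv> NA_vertex V E (k - 1)"

lemma finite_V: "finite V"
  and adj_sym: "E u w \<Longrightarrow> E w u"
  and adj_in_V: "E u w \<Longrightarrow> u \<in> V" "E u w \<Longrightarrow> w \<in> V"
  and not_adj_self: "\<not> E u u"
  and degree: "u \<in> V \<Longrightarrow> card {w \<in> V. E u w} = k"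
  and card_common_nbrs_cases: "u \<in> V \<Longrightarrow> w \<in> V \<Longrightarrow> u \<noteq> w \<Longrightarrow>
        card (common_nbrs V E u w) = a \<or> card (common_nbrs V E u w) = k - 1"
  using deza by (simp_all add: deza_graph_def)

lemma common_nbrs_in_V: "w \<in> common_nbrs V E u v \<Longrightarrow> w \<in> V"
  by (simp add: common_nbrs_def)

lemma finite_common_nbrs: "finite (common_nbrs V E u v)"
  using finite_V by (simp add: common_nbrs_def)

lemma bvert_unique:
  assumes "v \<in> V"
  shows "{u \<in> V. u \<noteq> v \<and> card (common_nbrs V E v u) = k - 1} = {bv v}"
proof -
  have "card {u \<in> V. u \<noteq> v \<and> card (common_nbrs V E v u) = k - 1} = 1"
    using beta_1 assms by (simp add: beta_at_def)
  then obtain s where s: "{u \<in> V. u \<noteq> v \<and> card (common_nbrs V E v u) = k - 1} = {s}"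
    by (rule card_1_singletonE)
  moreover have "bv v = s"
    unfolding bvert_def by (rule the_equality) (use s in blast)+
  ultimately show ?thesis
    by simp
qed

lemma bvert_in_V: "v \<in> V \<Longrightarrow> bv v \<in> V"
  and bvert_neq: "v \<in> V \<Longrightarrow> bv v \<noteq> v"
  and card_common_nbrs_bvert: "v \<in> V \<Longrightarrow> card (common_nbrs V E v (bv v)) = k - 1"
  and bvert_eqI: "v \<in> V \<Longrightarrow> u \<in> V \<Longrightarrow> u \<noteq> v \<Longrightarrow> card (common_nbrs V E v u) = k - 1 \<Longrightarrow> u = bv v"
  using bvert_unique[of v] by blast+

lemma bvert_bvert: "v \<in> V \<Longrightarrow> bv (bv v) = v"
  by (metis bvert_eqI bvert_in_V bvert_neq card_common_nbrs_bvert common_nbrs_commute)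

lemma card_common_nbrs_other:
  "v \<in> V \<Longrightarrow> u \<in> V \<Longrightarrow> u \<noteq> v \<Longrightarrow> u \<noteq> bv v \<Longrightarrow> card (common_nbrs V E v u) = a"
  by (metis bvert_eqI card_common_nbrs_cases)

lemma pvert_unique:
  assumes "v \<in> V"
  shows "{u. E v u \<and> \<not> E u (bv v)} = {pv v}"
proof -
  let ?N = "{w \<in> V. E v w}"
  let ?C = "common_nbrs V E v (bv v)"
  have C_sub: "?C \<subseteq> ?N"
    by (auto simp: common_nbrs_def)
  have "card (?N - ?C) = 1"
    using card_Diff_subset[OF finite_subset[OF C_sub] C_sub] finite_V degree[OF assms]
      card_common_nbrs_bvert[OF assms] k_gt_1 by simp
  then obtain s where s: "?N - ?C = {s}"
    by (rule card_1_singletonE)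
  have N_diff_C: "?N - ?C = {u. E v u \<and> \<not> E u (bv v)}"
    by (auto simp: common_nbrs_def intro: adj_sym adj_in_V)
  have "pv v = s"
    unfolding pvert_def by (rule the_equality) (use s N_diff_C adj_in_V in blast)+
  then show ?thesis
    using s N_diff_C by simp
qed

lemma adj_pvert: "v \<in> V \<Longrightarrow> E v (pv v)"
  and pvert_not_adj_bvert: "v \<in> V \<Longrightarrow> \<not> E (pv v) (bv v)"
  and pvert_eqI: "v \<in> V \<Longrightarrow> E v u \<Longrightarrow> \<not> E u (bv v) \<Longrightarrow> u = pv v"
  using pvert_unique[of v] by blast+

lemma pvert_in_V: "v \<in> V \<Longrightarrow> pv v \<in> V"
  using adj_pvert adj_in_V by blast

lemma nbrs_eq_insert_pvert:
  "v \<in> V \<Longrightarrow> {w \<in> V. E v w} = insert (pv v) (common_nbrs V E v (bv v))"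
  using adj_pvert pvert_eqI by (auto simp: common_nbrs_def dest: adj_in_V adj_sym)

lemma pvert_notin_common_nbrs_bvert: "v \<in> V \<Longrightarrow> pv v \<notin> common_nbrs V E v (bv v)"
  using pvert_not_adj_bvert by (auto simp: common_nbrs_def dest: adj_sym)

lemma pvert_A: "A v \<Longrightarrow> pv v = bv v"
  by (metis A_vertex_def not_adj_self pvert_eqI)

lemma A_bvert: "A v \<Longrightarrow> A (bv v)"
  by (metis A_vertex_def adj_sym bvert_bvert bvert_in_V)

lemma NA_bvert: "NA v \<Longrightarrow> NA (bv v)"
  by (metis NA_vertex_def adj_sym bvert_bvert bvert_in_V)

lemma A_neq_NA:
  assumes "A y" and "NA u"
  shows "u \<noteq> y" and "y \<noteq> u"
  using assms by (auto simp: A_vertex_def NA_vertex_def)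

text \<open>v and v_b have the same neighbours apart from v' and v_b', and every other vertex
  has exactly a common neighbours with each of them.\<close>
lemma adj_pvert_iff_adj_pvert_bvert:
  assumes v: "v \<in> V" and z: "z \<in> V" "z \<noteq> v" "z \<noteq> bv v"
  shows "E z (pv v) \<longleftrightarrow> E z (pv (bv v))"
proof -
  define D where "D = common_nbrs V E v (bv v)"
  have bv: "bv v \<in> V" "bv (bv v) = v"
    using bvert_in_V bvert_bvert v by auto
  have "finite D"
    unfolding D_def by (rule finite_common_nbrs)
  have N_v: "{w \<in> V. E v w} = insert (pv v) D" "pv v \<notin> D"
    using nbrs_eq_insert_pvert[OF v] pvert_notin_common_nbrs_bvert[OF v] by (simp_all add: D_def)
  have N_bv: "{w \<in> V. E (bv v) w} = insert (pv (bv v)) D" "pv (bv v) \<notin> D"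
    using nbrs_eq_insert_pvert[OF bv(1)] pvert_notin_common_nbrs_bvert[OF bv(1)] bv(2)
    by (simp_all add: D_def common_nbrs_commute)
  have "common_nbrs V E z v = {w \<in> insert (pv v) D. E z w}"
    unfolding N_v(1)[symmetric] by (auto simp: common_nbrs_def)
  then have "card {w \<in> insert (pv v) D. E z w} = a"
    using card_common_nbrs_other[OF v z] by (simp add: common_nbrs_commute)
  moreover have "common_nbrs V E z (bv v) = {w \<in> insert (pv (bv v)) D. E z w}"
    unfolding N_bv(1)[symmetric] by (auto simp: common_nbrs_def)
  then have "card {w \<in> insert (pv (bv v)) D. E z w} = a"
    using card_common_nbrs_other[OF bv(1) z(1)] z(2,3) bv(2) by (simp add: common_nbrs_commute)
  ultimately show ?thesis
    using card_filter_insert[OF \<open>finite D\<close> N_v(2)] card_filter_insert[OF \<open>finite D\<close> N_bv(2)]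
    by (auto simp: of_bool_def split: if_splits)
qed

lemma adj_A_bvert_iff:
  assumes "A y" and "z \<in> V" "z \<noteq> y" "z \<noteq> bv y"
  shows "E z (bv y) \<longleftrightarrow> E z y"
proof -
  have "y \<in> V"
    using assms(1) by (simp add: A_vertex_def)
  then show ?thesis
    using adj_pvert_iff_adj_pvert_bvert[OF _ assms(2-4)] pvert_A[OF assms(1)]
      pvert_A[OF A_bvert[OF assms(1)]] bvert_bvert by simp
qed

lemma pvert_not_adj_pvert_bvert:
  assumes "NA v"
  shows "\<not> E (pv v) (pv (bv v))"
proof -
  have v: "v \<in> V" "\<not> E v (bv v)"
    using assms by (simp_all add: NA_vertex_def)
  then have "pv v \<noteq> v" "pv v \<noteq> bv v"
    using adj_pvert not_adj_self by metis+
  then show ?thesis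
    using adj_pvert_iff_adj_pvert_bvert[OF v(1) pvert_in_V[OF v(1)]] not_adj_self by blast
qed

lemma common_nbrs_pvert_pvert_bvert:
  assumes "NA v"
  shows "common_nbrs V E (pv v) (pv (bv v)) = {w \<in> V. E (pv v) w} - {v}"
proof
  have v: "v \<in> V" "bv (bv v) = v"
    using assms bvert_bvert by (simp_all add: NA_vertex_def)
  show "common_nbrs V E (pv v) (pv (bv v)) \<subseteq> {w \<in> V. E (pv v) w} - {v}"
    using pvert_not_adj_bvert[OF bvert_in_V[OF v(1)]] v(2) by (auto simp: common_nbrs_def)
  show "{w \<in> V. E (pv v) w} - {v} \<subseteq> common_nbrs V E (pv v) (pv (bv v))"
  proof
    fix w
    assume w: "w \<in> {w \<in> V. E (pv v) w} - {v}"
    then have "w \<noteq> bv v"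
      using pvert_not_adj_bvert[OF v(1)] by blast
    then show "w \<in> common_nbrs V E (pv v) (pv (bv v))"
      using w adj_pvert_iff_adj_pvert_bvert[OF v(1), of w] by (auto simp: common_nbrs_def dest: adj_sym)
  qed
qed

lemma bvert_pvert_NA:
  assumes "NA v"
  shows "bv (pv v) = pv (bv v)"
proof -
  have v: "v \<in> V" "bv (bv v) = v"
    using assms bvert_bvert by (simp_all add: NA_vertex_def)
  have "v \<in> {w \<in> V. E (pv v) w}"
    using v(1) adj_pvert adj_sym by blast
  then have "card (common_nbrs V E (pv v) (pv (bv v))) = k - 1"
    using common_nbrs_pvert_pvert_bvert[OF assms] degree[OF pvert_in_V[OF v(1)]] finite_V
    by (simp add: card_Diff_singleton)
  moreover have "pv (bv v) \<noteq> pv v"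
    using adj_pvert[OF v(1)] pvert_not_adj_bvert[OF bvert_in_V[OF v(1)]] v(2) adj_sym by metis
  ultimately show ?thesis
    using bvert_eqI pvert_in_V bvert_in_V v(1) by metis
qed

lemma pvert_pvert_NA: "NA v \<Longrightarrow> pv (pv v) = v"
  by (metis NA_vertex_def adj_pvert adj_sym bvert_pvert_NA pvert_eqI pvert_in_V
      pvert_not_adj_bvert bvert_bvert bvert_in_V)

lemma NA_pvert: "NA v \<Longrightarrow> NA (pv v)"
  by (metis NA_vertex_def bvert_pvert_NA pvert_in_V pvert_not_adj_pvert_bvert)

lemma common_nbr_with_bvert_outside:
  assumes "w \<in> common_nbrs V E u v" and "bv w \<notin> common_nbrs V E u v"
  shows "w \<in> {bv u, pv u, bv v, pv v}"
proof -
  have w: "w \<in> V" "E u w" "E v w"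
    using assms(1) by (auto simp: common_nbrs_def)
  have "\<not> E u (bv w) \<or> \<not> E v (bv w)"
    using assms(2) bvert_in_V[OF w(1)] by (auto simp: common_nbrs_def dest: adj_sym)
  then have pv_w: "pv w \<in> {u, v}"
    using pvert_eqI[OF w(1)] w(2,3) adj_sym by blast
  show ?thesis
  proof (cases "A w")
    case True
    then show ?thesis
      using pv_w pvert_A bvert_bvert[OF w(1)] by auto
  next
    case False
    then have "NA w"
      using w(1) by (simp add: A_vertex_def NA_vertex_def)
    then show ?thesis
      using pv_w pvert_pvert_NA by auto
  qed
qed

lemma even_card_common_nbrs_iff:
  "even (card (common_nbrs V E u v)) \<longleftrightarrow>
     even (card {w \<in> common_nbrs V E u v. bv w \<notin> common_nbrs V E u v})"
proof -
  let ?S = "common_nbrs V E u v"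
  let ?T = "{w \<in> ?S. bv w \<in> ?S}" and ?R = "{w \<in> ?S. bv w \<notin> ?S}"
  have "bv (bv w) = w \<and> bv w \<noteq> w" if "w \<in> ?S" for w
    using that common_nbrs_in_V bvert_bvert bvert_neq by blast
  then have "even (card ?T)"
    by (intro even_card_involution[where h = bv]) auto
  have "card (?T \<union> ?R) = card ?T + card ?R"
    by (rule card_Un_disjoint) (use finite_common_nbrs in auto)
  moreover have "?T \<union> ?R = ?S"
    by blast
  ultimately have "card ?S = card ?T + card ?R"
    by simp
  with \<open>even (card ?T)\<close> show ?thesis
    by simp
qed

text \<open>For an NA-vertex x the set N(x, x') is closed under w \<mapsto> w_b.\<close>
lemma even_a:
  assumes "NA x"
  shows "even a"
proof -
  let ?S = "common_nbrs V E x (pv x)"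
  have x: "x \<in> V" "\<not> E x (bv x)"
    using assms by (simp_all add: NA_vertex_def)
  then have "pv x \<noteq> x" "pv x \<noteq> bv x"
    using adj_pvert not_adj_self by metis+
  then have "card ?S = a"
    using card_common_nbrs_other[OF x(1) pvert_in_V[OF x(1)]] by blast
  moreover have "{bv x, pv x, bv (pv x), pv (pv x)} = {bv x, pv x, pv (bv x), x}"
    using bvert_pvert_NA[OF assms] pvert_pvert_NA[OF assms] by simp
  moreover have "w \<notin> ?S" if "w \<in> {bv x, pv x, pv (bv x), x}" for w
    using that x(2) not_adj_self pvert_not_adj_pvert_bvert[OF assms]
    by (auto simp: common_nbrs_def)
  ultimately have "{w \<in> ?S. bv w \<notin> ?S} = {}"
    using common_nbr_with_bvert_outside by blast
  then show ?thesis
    using even_card_common_nbrs_iff[of x "pv x"] \<open>card ?S = a\<close> by (metis card.empty even_zero)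
qed

text \<open>Parity count in N(x, y): apart from x' and y_b, its elements come in pairs {w, w_b}.\<close>
lemma NA_A_adj_bvert_iff_adj_pvert:
  assumes x: "NA x" and y: "A y"
  shows "E x (bv y) \<longleftrightarrow> E y (pv x)"
proof -
  let ?S = "common_nbrs V E x y"
  have xV: "x \<in> V" and yV: "y \<in> V"
    using x y by (simp_all add: NA_vertex_def A_vertex_def)
  have "card ?S = a"
    using card_common_nbrs_other[OF xV yV A_neq_NA(2)[OF y x] A_neq_NA(2)[OF y NA_bvert[OF x]]] .
  have "{w \<in> ?S. bv w \<notin> ?S} = {pv x, bv y} \<inter> ?S"
  proof (intro equalityI subsetI)
    fix w
    assume w: "w \<in> {w \<in> ?S. bv w \<notin> ?S}"
    then have "w \<in> {bv x, pv x, bv y, pv y}"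
      using common_nbr_with_bvert_outside by blast
    moreover have "bv x \<notin> ?S"
      using x by (auto simp: NA_vertex_def common_nbrs_def dest: adj_sym)
    ultimately show "w \<in> {pv x, bv y} \<inter> ?S"
      using w pvert_A[OF y] by auto
  next
    fix w
    assume w: "w \<in> {pv x, bv y} \<inter> ?S"
    have "bv (pv x) \<notin> ?S"
      using pvert_not_adj_bvert[OF bvert_in_V[OF xV]] bvert_bvert[OF xV] bvert_pvert_NA[OF x]
      by (auto simp: common_nbrs_def dest: adj_sym)
    moreover have "bv (bv y) \<notin> ?S"
      using bvert_bvert[OF yV] not_adj_self by (simp add: common_nbrs_def)
    ultimately show "w \<in> {w \<in> ?S. bv w \<notin> ?S}"
      using w by auto
  qed
  moreover have "pv x \<noteq> bv y"
    using A_neq_NA(1)[OF A_bvert[OF y] NA_pvert[OF x]] .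
  then have "even (card ({pv x, bv y} \<inter> ?S)) \<longleftrightarrow> (pv x \<in> ?S \<longleftrightarrow> bv y \<in> ?S)"
    by (cases "pv x \<in> ?S"; cases "bv y \<in> ?S") auto
  ultimately have "pv x \<in> ?S \<longleftrightarrow> bv y \<in> ?S"
    using \<open>card ?S = a\<close> even_a[OF x] even_card_common_nbrs_iff[of x y] by simp
  moreover have "pv x \<in> ?S \<longleftrightarrow> E y (pv x)"
    using adj_pvert[OF xV] pvert_in_V[OF xV] by (auto simp: common_nbrs_def dest: adj_sym)
  moreover have "bv y \<in> ?S \<longleftrightarrow> E x (bv y)"
    using y bvert_in_V[OF yV] by (auto simp: A_vertex_def common_nbrs_def dest: adj_sym)
  ultimately show ?thesis
    by blast
qed

lemma NA_A_adj_iff_adj: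
  assumes x: "NA x" and y: "A y"
    and u: "u \<in> {x, pv x, bv x, pv (bv x)}" and w: "w \<in> {y, bv y}"
  shows "E u w \<longleftrightarrow> E x y"
proof -
  have xV: "x \<in> V" and yV: "y \<in> V"
    using x y by (simp_all add: NA_vertex_def A_vertex_def)
  have NA_x': "NA (pv x)" and NA_xb: "NA (bv x)" and NA_xb': "NA (bv (pv x))"
    using NA_pvert[OF x] NA_bvert[OF x] NA_bvert[OF NA_pvert[OF x]] .
  have NA_u: "NA u"
    using u x NA_x' NA_xb NA_pvert[OF NA_xb] by (elim insertE emptyE) simp_all
  then have "u \<in> V"
    by (simp add: NA_vertex_def)
  have "E u (bv y) \<longleftrightarrow> E u y"
    using adj_A_bvert_iff[OF y \<open>u \<in> V\<close> A_neq_NA(1)[OF y NA_u] A_neq_NA(1)[OF A_bvert[OF y] NA_u]] .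
  with w have "E u w \<longleftrightarrow> E u y"
    by blast
  moreover have "E y u \<longleftrightarrow> E y x"
  proof -
    have x'_iff: "E y (pv x) \<longleftrightarrow> E y x"
      using NA_A_adj_bvert_iff_adj_pvert[OF x y] adj_A_bvert_iff[OF y xV]
        A_neq_NA[OF y x] A_neq_NA[OF A_bvert[OF y] x] adj_sym by blast
    have "E y (pv x) \<longleftrightarrow> E y (pv (bv x))"
      using adj_pvert_iff_adj_pvert_bvert[OF xV yV A_neq_NA(2)[OF y x] A_neq_NA(2)[OF y NA_xb]] .
    with x'_iff have xb'_iff: "E y (pv (bv x)) \<longleftrightarrow> E y x"
      by simp
    have "E y (pv (pv x)) \<longleftrightarrow> E y (pv (bv (pv x)))"
      using adj_pvert_iff_adj_pvert_bvert[OF pvert_in_V[OF xV] yV]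
        A_neq_NA(2)[OF y NA_x'] A_neq_NA(2)[OF y NA_xb'] by blast
    then have xb_iff: "E y (bv x) \<longleftrightarrow> E y x"
      by (simp only: pvert_pvert_NA[OF x] bvert_pvert_NA[OF x] pvert_pvert_NA[OF NA_xb])
    from u show ?thesis
      using x'_iff xb'_iff xb_iff by (elim insertE emptyE) simp_all
  qed
  moreover have "E u y \<longleftrightarrow> E y u" and "E y x \<longleftrightarrow> E x y"
    using adj_sym by blast+
  ultimately show ?thesis
    by simp
qed

end

theorem lemma18:
  fixes V :: "'v set" and E :: "'v \<Rightarrow> 'v \<Rightarrow> bool" and n k a :: nat and x y :: 'v
  assumes deza: "deza_graph V E n k (k - 1) a"
    and k1: "k > 1"
    and beta1: "\<forall>v \<in> V. beta_at V E (k - 1) v = 1"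
    and NAx: "NA_vertex V E (k - 1) x"
    and Ay: "A_vertex V E (k - 1) y"
  shows "(E x y \<longrightarrow>
            y \<in> common_nbrs V E x (pvert V E (k - 1) x) \<and>
            bvert V E (k - 1) y \<in> common_nbrs V E x (pvert V E (k - 1) x))
       \<and> ((\<forall>u \<in> {x, pvert V E (k - 1) x, bvert V E (k - 1) x,
                   pvert V E (k - 1) (bvert V E (k - 1) x)}.
              \<forall>w \<in> {y, bvert V E (k - 1) y}. E u w)
          \<or> (\<forall>u \<in> {x, pvert V E (k - 1) x, bvert V E (k - 1) x,
                   pvert V E (k - 1) (bvert V E (k - 1) x)}.
              \<forall>w \<in> {y, bvert V E (k - 1) y}. \<not> E u w))"
proof -
  interpret deza_beta1 V E n k a
    using deza k1 beta1 by unfold_locales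
  have adj_iff: "E u w \<longleftrightarrow> E x y"
    if "u \<in> {x, pv x, bv x, pv (bv x)}" "w \<in> {y, bv y}" for u w
    using NA_A_adj_iff_adj[OF NAx Ay that] .
  have "y \<in> V" "bv y \<in> V"
    using Ay bvert_in_V by (simp_all add: A_vertex_def)
  then have "E x y \<longrightarrow> y \<in> common_nbrs V E x (pv x) \<and> bv y \<in> common_nbrs V E x (pv x)"
    using adj_iff[of "pv x" y] adj_iff[of x "bv y"] adj_iff[of "pv x" "bv y"]
    by (simp add: common_nbrs_def)
  moreover have "(\<forall>u \<in> {x, pv x, bv x, pv (bv x)}. \<forall>w \<in> {y, bv y}. E u w)
      \<or> (\<forall>u \<in> {x, pv x, bv x, pv (bv x)}. \<forall>w \<in> {y, bv y}. \<not> E u w)"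
    using adj_iff by blast
  ultimately show ?thesis
    by blast
qed

end
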